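(* Let $p$ and $s$ be distinct odd primes, $g$ a primitive root modulo $p$, $\zeta$ a primitive $p$-th root of unity in $\overline{\mathbb{F}}_s$, and $G(p)=\langle a,b\mid a^p=1=b^{(p-1)/2},\ b^{-1}ab=a^{g^2}\rangle$. Let $\rho:\langle a\rangle\to\overline{\mathbb{F}}_s^*$ be given by $\rho(a)=\zeta$ and let $\rho^{G(p)}$ be the induced representation. Then $\rho^{G(p)}$ is realizable over $\mathbb{F}_s$ if and only if $\left(\frac{p^*}{s}\right)=1$, where $p^*=(-1)^{(p-1)/2}p$.
   Context: $\left(\frac{\cdot}{s}\right)$ is the Legendre symbol. A representation over $\overline{\mathbb{F}}_s$ is realizable over $\mathbb{F}_s$ if it is equivalent (over $\overline{\mathbb{F}}_s$) to a matrix representation with all matrix entries in $\mathbb{F}_s$. Concretely, with $n=(p-1)/2$, $\rho^{G(p)}$ acts on a space with basis $e_0,\dots,e_{n-1}$ by $ae_i=\zeta^{g^{2i}}e_i$, $be_i=e_{i+1}$ (indices modulo $n$). *)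

theory Defs
  imports "HOL-Number_Theory.Number_Theory" "HOL-Computational_Algebra.Polynomial"
    "Jordan_Normal_Form.Matrix"
begin

definition in_prime_field :: "'k :: field \<Rightarrow> bool" where
  "in_prime_field x \<longleftrightarrow> (\<exists>m::nat. x = of_nat m)"

(* 'k is (a model of) the algebraic closure of F_s: algebraically closed, characteristic s,
   and every element is algebraic over F_s, i.e. lies in some finite field F_{s^e}. *)
definition is_alg_closure_of_Fp :: "'k :: alg_closed_field itself \<Rightarrow> nat \<Rightarrow> bool" where
  "is_alg_closure_of_Fp TYPE('k) s \<longleftrightarrow>
     CHAR('k) = s \<and> (\<forall>x::'k. \<exists>e>0. x ^ (s ^ e) = x)"

definition prim_root_of_unity :: "nat \<Rightarrow> 'k :: field \<Rightarrow> bool" where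
  "prim_root_of_unity p z \<longleftrightarrow> z ^ p = 1 \<and> (\<forall>k. 0 < k \<and> k < p \<longrightarrow> z ^ k \<noteq> 1)"

(* Matrices of the induced representation rho^{G(p)} on the generators a, b,
   w.r.t. basis e_0..e_{n-1}, n = (p-1)/2:  a e_i = zeta^(g^(2i)) e_i,  b e_i = e_{i+1 mod n}.
   Column j of the matrix is the image of e_j. *)
definition ind_rep_a :: "nat \<Rightarrow> nat \<Rightarrow> 'k :: field \<Rightarrow> 'k mat" where
  "ind_rep_a p g z = mat ((p - 1) div 2) ((p - 1) div 2)
     (\<lambda>(i, j). if i = j then z ^ (g ^ (2 * i)) else 0)"

definition ind_rep_b :: "nat \<Rightarrow> 'k :: field mat" where
  "ind_rep_b p = mat ((p - 1) div 2) ((p - 1) div 2)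
     (\<lambda>(i, j). if i = (j + 1) mod ((p - 1) div 2) then 1 else 0)"

definition mat_over_prime_field :: "'k :: field mat \<Rightarrow> bool" where
  "mat_over_prime_field M \<longleftrightarrow>
     (\<forall>i < dim_row M. \<forall>j < dim_col M. in_prime_field (M $$ (i, j)))"

(* A representation given by generator matrices A, B is realizable over F_s iff it is
   equivalent (over 'k) to one with all matrices over F_s; since G(p) is generated by a, b
   and products of F_s-matrices are F_s-matrices, it suffices to conjugate A and B
   simultaneously into F_s-matrices. *)
definition realizable_over_prime_field :: "'k :: field mat \<Rightarrow> 'k mat \<Rightarrow> bool" where
  "realizable_over_prime_field A B \<longleftrightarrow>
     (\<exists>P Q A' B'. similar_mat_wit A' A P Q \<and> similar_mat_wit B' B P Q \<and>
        mat_over_prime_field A' \<and> mat_over_prime_field B')"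

end

theory Submission
  imports Defs "Jordan_Normal_Form.Determinant"
begin

(* Realizability of the induced representation rho^G(p) over F_s, by Galois descent along
   the Frobenius map F(x) = x^s of a field of characteristic s.

   In the basis e_0..e_{n-1} (n = (p-1)/2) the generator a acts diagonally with eigenvalues
   z_i = zeta^(g^(2i)), and b acts by the cyclic shift e_j -> e_{j+1}.  A matrix has entries
   in F_s iff it is fixed by F (applied entrywise).  Hence
   - if (A, B) is simultaneously conjugate to a pair over F_s, then F(A) is conjugate to A,
     so F permutes the eigenvalues: z_i^s = z_0 for some i, i.e. g^(2i) s = 1 (mod p), and
     s is a square mod p;
   - conversely, if s = g^(2k) (mod p), then F maps z_j to z_(j+k mod n); for the Vandermonde
     matrix V = (z_j^i) this reads F(V) = V * (shift by k), and conjugating by V turns A and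
     the shift B (which commutes with every cyclic shift) into F-fixed matrices.
   Finally, by Euler's criterion and quadratic reciprocity, s is a square mod p iff
   Legendre(p*, s) = 1. *)

definition frobenius_mat :: "'k :: field mat \<Rightarrow> 'k mat" where
  "frobenius_mat M = map_mat (\<lambda>x. x ^ CHAR('k)) M"

lemma of_nat_power_CHAR:
  assumes "prime CHAR('k :: comm_semiring_1)"
  shows "(of_nat m :: 'k) ^ CHAR('k) = of_nat m"
proof (induction m)
  case 0
  show ?case using prime_gt_0_nat[OF assms] by (simp add: power_0_left)
next
  case (Suc m)
  have "(of_nat (Suc m) :: 'k) ^ CHAR('k) = (of_nat m + 1) ^ CHAR('k)" by (simp add: add.commute)
  also have "\<dots> = of_nat m ^ CHAR('k) + 1 ^ CHAR('k)" by (rule freshmans_dream[OF assms refl])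
  finally show ?case using Suc by (simp add: add.commute)
qed

(* The prime field consists exactly of the Frobenius-fixed elements: X^s - X has at most s roots,
   and the s distinct elements of the prime field are roots already. *)
lemma in_prime_field_iff_frobenius_fixed:
  fixes x :: "'k :: field"
  assumes char: "prime CHAR('k)"
  shows "in_prime_field x \<longleftrightarrow> x ^ CHAR('k) = x"
proof
  assume "in_prime_field x"
  then show "x ^ CHAR('k) = x"
    using of_nat_power_CHAR[OF char] by (auto simp: in_prime_field_def)
next
  assume fixed: "x ^ CHAR('k) = x"
  let ?s = "CHAR('k)"
  define q :: "'k poly" where "q = monom 1 ?s - [:0, 1:]"
  have s2: "?s \<ge> 2" using prime_ge_2_nat[OF char] .
  have "coeff q ?s = 1" using s2 by (simp add: q_def coeff_pCons split: nat.split)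
  then have q0: "q \<noteq> 0" by auto
  have deg: "degree q \<le> ?s" unfolding q_def
    by (rule order.trans[OF degree_diff_le_max]) (use s2 in \<open>auto simp: degree_monom_eq\<close>)
  have roots: "poly q y = 0 \<longleftrightarrow> y ^ ?s = y" for y by (simp add: q_def poly_monom)
  have inj: "inj_on (of_nat :: nat \<Rightarrow> 'k) {..<?s}"
    by (auto simp: inj_on_def of_nat_eq_iff_cong_CHAR cong_def)
  show "in_prime_field x"
  proof (rule ccontr)
    assume "\<not> in_prime_field x"
    then have "x \<notin> of_nat ` {..<?s}" by (auto simp: in_prime_field_def)
    then have "?s + 1 = card (insert x (of_nat ` {..<?s}))" using inj by (simp add: card_image)
    also have "\<dots> \<le> card {y. poly q y = 0}"
      by (rule card_mono[OF poly_roots_finite[OF q0]])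
        (use fixed of_nat_power_CHAR[OF char] in \<open>auto simp: roots\<close>)
    also have "\<dots> \<le> degree q" by (rule card_poly_roots_bound[OF q0])
    finally show False using deg by simp
  qed
qed

lemma mat_over_prime_field_iff_frobenius_fixed:
  fixes M :: "'k :: field mat"
  assumes "prime CHAR('k)"
  shows "mat_over_prime_field M \<longleftrightarrow> frobenius_mat M = M"
proof
  assume "mat_over_prime_field M"
  then show "frobenius_mat M = M"
    by (intro eq_matI) (auto simp: mat_over_prime_field_def frobenius_mat_def
        in_prime_field_iff_frobenius_fixed[OF assms])
next
  assume "frobenius_mat M = M"
  then have "(M $$ (i, j)) ^ CHAR('k) = M $$ (i, j)" if "i < dim_row M" "j < dim_col M" for i j
    using that by (metis frobenius_mat_def index_map_mat(1))
  then show "mat_over_prime_field M"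
    by (simp add: mat_over_prime_field_def in_prime_field_iff_frobenius_fixed[OF assms])
qed

lemma frobenius_mat_mult:
  fixes A B :: "'k :: field mat"
  assumes char: "prime CHAR('k)" and "A \<in> carrier_mat n m" "B \<in> carrier_mat m l"
  shows "frobenius_mat (A * B) = frobenius_mat A * frobenius_mat B"
proof (rule eq_matI)
  fix i j assume "i < dim_row (frobenius_mat A * frobenius_mat B)"
    "j < dim_col (frobenius_mat A * frobenius_mat B)"
  then have ij: "i < n" "j < l" using assms by (auto simp: frobenius_mat_def)
  have "frobenius_mat (A * B) $$ (i, j) = (\<Sum>k<m. A $$ (i, k) * B $$ (k, j)) ^ CHAR('k)"
    using assms ij by (simp add: frobenius_mat_def scalar_prod_def lessThan_atLeast0)
  also have "\<dots> = (\<Sum>k<m. (A $$ (i, k) * B $$ (k, j)) ^ CHAR('k))"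
    by (rule freshmans_dream_sum[OF char refl])
  also have "\<dots> = (frobenius_mat A * frobenius_mat B) $$ (i, j)"
    using assms ij
    by (simp add: frobenius_mat_def scalar_prod_def lessThan_atLeast0 power_mult_distrib)
  finally show "frobenius_mat (A * B) $$ (i, j) = (frobenius_mat A * frobenius_mat B) $$ (i, j)" .
qed (use assms in \<open>auto simp: frobenius_mat_def\<close>)

lemma frobenius_mat_one:
  assumes "prime CHAR('k :: field)"
  shows "frobenius_mat (1\<^sub>m n :: 'k mat) = 1\<^sub>m n"
  using prime_gt_0_nat[OF assms]
  by (intro eq_matI) (auto simp: frobenius_mat_def power_0_left)

lemma frobenius_mat_diag:
  assumes "prime CHAR('k :: field)"
  shows "frobenius_mat (mat_diag n d :: 'k mat) = mat_diag n (\<lambda>i. d i ^ CHAR('k))"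
  using prime_gt_0_nat[OF assms]
  by (intro eq_matI) (auto simp: frobenius_mat_def mat_diag_def power_0_left)

(* A Vandermonde matrix with distinct nodes is invertible: a kernel vector would give a nonzero
   polynomial of degree < n with the n roots z_0, ..., z_{n-1}. *)
lemma vandermonde_det_nonzero:
  fixes z :: "nat \<Rightarrow> 'k :: field"
  assumes "inj_on z {..<n}"
  shows "det (mat n n (\<lambda>(i, j). z i ^ j)) \<noteq> 0"
proof
  define V where "V = mat n n (\<lambda>(i, j). z i ^ j)"
  have V: "V \<in> carrier_mat n n" by (simp add: V_def)
  assume "det (mat n n (\<lambda>(i, j). z i ^ j)) = 0"
  then obtain v where v: "v \<in> carrier_vec n" "v \<noteq> 0\<^sub>v n" "V *\<^sub>v v = 0\<^sub>v n"
    using det_0_iff_vec_prod_zero[OF V] by (auto simp: V_def)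
  define q where "q = (\<Sum>j<n. monom (v $ j) j)"
  have coeff_q: "coeff q j = (if j < n then v $ j else 0)" for j
    by (simp add: q_def coeff_sum coeff_monom sum.delta' lessThan_def)
  obtain j where j: "j < n" "v $ j \<noteq> 0" using v(1,2) by (metis eq_vecI carrier_vecD index_zero_vec)
  then have q0: "q \<noteq> 0" using coeff_q[of j] by auto
  have deg: "degree q \<le> n - 1" by (rule degree_le) (use coeff_q in auto)
  have roots: "poly q (z i) = 0" if "i < n" for i
  proof -
    have "poly q (z i) = (\<Sum>j<n. z i ^ j * v $ j)"
      by (simp add: q_def poly_sum poly_monom mult.commute)
    also have "\<dots> = (V *\<^sub>v v) $ i"
      using that v(1) by (simp add: V_def scalar_prod_def lessThan_atLeast0)
    finally show ?thesis using v(3) that by simp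
  qed
  have "n = card (z ` {..<n})" using assms by (simp add: card_image)
  also have "\<dots> \<le> card {x. poly q x = 0}"
    by (rule card_mono[OF poly_roots_finite[OF q0]]) (use roots in auto)
  also have "\<dots> \<le> degree q" by (rule card_poly_roots_bound[OF q0])
  finally show False using deg j(1) by simp
qed

lemma det_nonzero_imp_inverse:
  fixes A :: "'k :: field mat"
  assumes "A \<in> carrier_mat n n" "det A \<noteq> 0"
  obtains B where "B \<in> carrier_mat n n" "A * B = 1\<^sub>m n" "B * A = 1\<^sub>m n"
  using det_non_zero_imp_unit[OF assms, of "()"] that unfolding Units_def ring_mat_def by auto

definition cyclic_shift_mat :: "nat \<Rightarrow> nat \<Rightarrow> 'a :: semiring_1 mat" where
  "cyclic_shift_mat n m = mat n n (\<lambda>(i, j). if i = (j + m) mod n then 1 else 0)"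

lemma mult_cyclic_shift_mat:
  fixes X :: "'a :: semiring_1 mat"
  assumes "X \<in> carrier_mat r n"
  shows "X * cyclic_shift_mat n m = mat r n (\<lambda>(i, j). X $$ (i, (j + m) mod n))"
proof (rule eq_matI)
  fix i j assume "i < dim_row (mat r n (\<lambda>(i, j). X $$ (i, (j + m) mod n)))"
    "j < dim_col (mat r n (\<lambda>(i, j). X $$ (i, (j + m) mod n)))"
  then have ij: "i < r" "j < n" by auto
  have "(X * cyclic_shift_mat n m) $$ (i, j)
      = (\<Sum>l\<in>{0..<n}. X $$ (i, l) * cyclic_shift_mat n m $$ (l, j))"
    using assms ij by (simp add: scalar_prod_def cyclic_shift_mat_def)
  also have "\<dots> = (\<Sum>l\<in>{0..<n}. if l = (j + m) mod n then X $$ (i, l) else 0)"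
    by (rule sum.cong) (use ij in \<open>auto simp: cyclic_shift_mat_def\<close>)
  also have "\<dots> = X $$ (i, (j + m) mod n)" using ij by (simp add: sum.delta)
  finally show "(X * cyclic_shift_mat n m) $$ (i, j)
      = mat r n (\<lambda>(i, j). X $$ (i, (j + m) mod n)) $$ (i, j)" using ij by simp
qed (use assms in \<open>auto simp: cyclic_shift_mat_def\<close>)

lemma cyclic_shift_mat_add:
  "cyclic_shift_mat n a * cyclic_shift_mat n b = (cyclic_shift_mat n (a + b) :: 'a :: semiring_1 mat)"
proof -
  have shift_sum: "((j + b) mod n + a) mod n = (j + (a + b)) mod n" for j
  proof -
    have "((j + b) mod n + a) mod n = (j + b + a) mod n" by (rule mod_add_left_eq)
    then show ?thesis by (simp add: ac_simps)
  qed
  have "cyclic_shift_mat n a * cyclic_shift_mat n b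
      = mat n n (\<lambda>(i, j). cyclic_shift_mat n a $$ (i, (j + b) mod n) :: 'a)"
    by (rule mult_cyclic_shift_mat) (simp add: cyclic_shift_mat_def)
  also have "\<dots> = cyclic_shift_mat n (a + b)"
    by (rule eq_matI) (auto simp: cyclic_shift_mat_def shift_sum)
  finally show ?thesis .
qed

lemma cyclic_shift_mat_commute:
  "cyclic_shift_mat n a * cyclic_shift_mat n b = (cyclic_shift_mat n b * cyclic_shift_mat n a :: 'a :: semiring_1 mat)"
  by (simp add: cyclic_shift_mat_add add.commute)

(* If an invertible M intertwines two diagonal matrices, diag(e) M = M diag(d), then every
   d_j occurs among the e_i: otherwise column j of M would vanish. *)
lemma intertwined_diagonal_eigenvalue:
  fixes d e :: "nat \<Rightarrow> 'k :: idom"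
  assumes M: "M \<in> carrier_mat n n" and M': "M' \<in> carrier_mat n n"
    and inv: "M' * M = 1\<^sub>m n"
    and intertwine: "mat_diag n e * M = M * mat_diag n d" and j: "j < n"
  shows "\<exists>i<n. e i = d j"
proof (rule ccontr)
  assume "\<not> (\<exists>i<n. e i = d j)"
  then have column_zero: "M $$ (i, j) = 0" if "i < n" for i
  proof -
    have "e i * M $$ (i, j) = M $$ (i, j) * d j"
      using arg_cong[OF intertwine, of "\<lambda>X. X $$ (i, j)"] that j
      by (simp add: mat_diag_mult_left[OF M] mat_diag_mult_right[OF M])
    then have "M $$ (i, j) * e i = M $$ (i, j) * d j" by (simp add: mult.commute)
    then show ?thesis using \<open>\<not> (\<exists>i<n. e i = d j)\<close> that by simp
  qed
  have "(M' * M) $$ (j, j) = (\<Sum>k\<in>{0..<n}. M' $$ (j, k) * M $$ (k, j))"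
    using M M' j by (simp add: scalar_prod_def)
  also have "\<dots> = 0" using column_zero by simp
  finally show False using inv j by simp
qed

lemma frobenius_fixed_conjugate_intertwines:
  fixes A D P Q :: "'k :: field mat"
  assumes char: "prime CHAR('k)" and sim: "similar_mat_wit A D P Q"
    and fixed: "frobenius_mat A = A" and D: "D \<in> carrier_mat n n"
  shows "frobenius_mat D * (frobenius_mat Q * P) = (frobenius_mat Q * P) * D"
    and "(Q * frobenius_mat P) * (frobenius_mat Q * P) = 1\<^sub>m n"
proof -
  let ?F = "frobenius_mat :: 'k mat \<Rightarrow> 'k mat"
  have "dim_row A = n" using similar_mat_witD(5)[OF refl sim] D by auto
  note sim_facts = similar_mat_witD[OF this[symmetric] sim]
  have P: "P \<in> carrier_mat n n" and Q: "Q \<in> carrier_mat n n" and QP: "Q * P = 1\<^sub>m n"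
    and A: "A = P * D * Q" using sim_facts by auto
  have FP: "?F P \<in> carrier_mat n n" and FQ: "?F Q \<in> carrier_mat n n"
    and FD: "?F D \<in> carrier_mat n n" using P Q D by (auto simp: frobenius_mat_def)
  have FPQ: "?F P * ?F Q = 1\<^sub>m n" and FQP: "?F Q * ?F P = 1\<^sub>m n"
    using sim_facts frobenius_mat_mult[OF char P Q] frobenius_mat_mult[OF char Q P]
      frobenius_mat_one[OF char] by metis+
  have FA: "?F P * ?F D * ?F Q = P * D * Q"
    using fixed A frobenius_mat_mult[OF char mult_carrier_mat[OF P D] Q]
      frobenius_mat_mult[OF char P D] by metis
  have "?F D * (?F Q * P) = (?F Q * ?F P) * ?F D * (?F Q * P)"
    using FQP FD by simp
  also have "\<dots> = ?F Q * (?F P * ?F D * ?F Q) * P"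
    using FP FQ FD P by (simp add: assoc_mult_mat[of _ n n _ n _ n])
  also have "\<dots> = (?F Q * P) * D * (Q * P)"
    unfolding FA using FQ P D Q by (simp add: assoc_mult_mat[of _ n n _ n _ n])
  also have "\<dots> = (?F Q * P) * D"
    using QP FQ P D by simp
  finally show "?F D * (?F Q * P) = (?F Q * P) * D" .
  have "(Q * ?F P) * (?F Q * P) = Q * (?F P * ?F Q) * P"
    using Q FP FQ P by (simp add: assoc_mult_mat[of _ n n _ n _ n])
  then show "(Q * ?F P) * (?F Q * P) = 1\<^sub>m n"
    using FPQ QP Q by simp
qed

lemma frobenius_permutes_diagonal:
  fixes d :: "nat \<Rightarrow> 'k :: field"
  assumes char: "prime CHAR('k)" and sim: "similar_mat_wit A (mat_diag n d) P Q"
    and over: "mat_over_prime_field A" and j: "j < n"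
  shows "\<exists>i<n. d i ^ CHAR('k) = d j"
proof -
  have fixed: "frobenius_mat A = A"
    using over mat_over_prime_field_iff_frobenius_fixed[OF char] by blast
  have "dim_row A = n" using similar_mat_witD(5)[OF refl sim] by (auto simp: mat_diag_def)
  note sim_facts = similar_mat_witD[OF this[symmetric] sim]
  then have "frobenius_mat Q * P \<in> carrier_mat n n" "Q * frobenius_mat P \<in> carrier_mat n n"
    by (auto simp: frobenius_mat_def)
  then show ?thesis
    using intertwined_diagonal_eigenvalue[OF _ _ _ _ j]
      frobenius_fixed_conjugate_intertwines[OF char sim fixed mat_diag_dim]
    unfolding frobenius_mat_diag[OF char] by blast
qed

lemma frobenius_fixed_conjugate:
  fixes V W S X :: "'k :: field mat"
  assumes char: "prime CHAR('k)"
    and V: "V \<in> carrier_mat n n" and W: "W \<in> carrier_mat n n"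
    and S: "S \<in> carrier_mat n n" and X: "X \<in> carrier_mat n n"
    and VW: "V * W = 1\<^sub>m n" and WV: "W * V = 1\<^sub>m n"
    and FV: "frobenius_mat V = V * S" and FX: "S * frobenius_mat X = X * S"
  shows "frobenius_mat (V * X * W) = V * X * W"
proof -
  let ?F = "frobenius_mat :: 'k mat \<Rightarrow> 'k mat"
  have FW: "?F W \<in> carrier_mat n n" and FX': "?F X \<in> carrier_mat n n"
    using W X by (auto simp: frobenius_mat_def)
  have "V * (S * ?F W) = 1\<^sub>m n"
    using FV VW frobenius_mat_mult[OF char V W] frobenius_mat_one[OF char] V S FW
    by (metis assoc_mult_mat)
  then have "W * V * (S * ?F W) = W"
    using W V S FW by (simp add: assoc_mult_mat[of _ n n _ n _ n])
  then have SFW: "S * ?F W = W" using WV S FW by simp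
  have "?F (V * X * W) = ?F V * ?F X * ?F W"
    using frobenius_mat_mult[OF char mult_carrier_mat[OF V X] W] frobenius_mat_mult[OF char V X]
    by simp
  also have "\<dots> = V * (S * ?F X) * ?F W"
    unfolding FV using V S FX' FW by (simp add: assoc_mult_mat[of _ n n _ n _ n])
  also have "\<dots> = V * X * (S * ?F W)"
    unfolding FX using V S X FW by (simp add: assoc_mult_mat[of _ n n _ n _ n])
  finally show ?thesis unfolding SFW .
qed

(* The conjugating matrix is the Vandermonde matrix V = (z_j^i), for which F(V) = V S_k. *)
lemma realizable_diagonal_cyclic_shift:
  fixes z :: "nat \<Rightarrow> 'k :: field"
  assumes char: "prime CHAR('k)" and inj: "inj_on z {..<n}"
    and orbit: "\<And>j. j < n \<Longrightarrow> z j ^ CHAR('k) = z ((j + k) mod n)"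
  shows "realizable_over_prime_field (mat_diag n z) (cyclic_shift_mat n m)"
proof -
  let ?F = "frobenius_mat :: 'k mat \<Rightarrow> 'k mat"
  define V where "V = mat n n (\<lambda>(i, j). z j ^ i)"
  define S :: "'k mat" where "S = cyclic_shift_mat n k"
  define A where "A = mat_diag n z"
  define B :: "'k mat" where "B = cyclic_shift_mat n m"
  have V: "V \<in> carrier_mat n n" and S: "S \<in> carrier_mat n n"
    and A: "A \<in> carrier_mat n n" and B: "B \<in> carrier_mat n n"
    by (auto simp: V_def S_def A_def B_def cyclic_shift_mat_def)
  have "V = transpose_mat (mat n n (\<lambda>(i, j). z i ^ j))"
    by (auto simp: V_def)
  then have "det V \<noteq> 0"
    using vandermonde_det_nonzero[OF inj] det_transpose[of "mat n n (\<lambda>(i, j). z i ^ j)" n] by simp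
  then obtain W where W: "W \<in> carrier_mat n n" and VW: "V * W = 1\<^sub>m n" and WV: "W * V = 1\<^sub>m n"
    using det_nonzero_imp_inverse[OF V] by blast
  have "(z j ^ i) ^ CHAR('k) = z ((j + k) mod n) ^ i" if "j < n" for i j
  proof -
    have "(z j ^ i) ^ CHAR('k) = (z j ^ CHAR('k)) ^ i" by (simp flip: power_mult add: mult.commute)
    then show ?thesis using orbit[OF that] by simp
  qed
  then have FV: "?F V = V * S"
    unfolding S_def mult_cyclic_shift_mat[OF V]
    by (intro eq_matI) (auto simp: frobenius_mat_def V_def)
  have FA: "S * ?F A = A * S"
  proof -
    have "(S * ?F A) $$ (i, j) = (A * S) $$ (i, j)" if "i < n" "j < n" for i j
      using that orbit[of j]
      by (simp add: A_def frobenius_mat_diag[OF char] mat_diag_mult_left[OF S]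
          mat_diag_mult_right[OF S]) (simp add: S_def cyclic_shift_mat_def)
    then show ?thesis using S A by (intro eq_matI) (auto simp: frobenius_mat_def)
  qed
  have "?F B = B"
    using prime_gt_0_nat[OF char]
    by (intro eq_matI) (auto simp: B_def frobenius_mat_def cyclic_shift_mat_def power_0_left)
  then have FB: "S * ?F B = B * S"
    by (simp add: S_def B_def cyclic_shift_mat_commute)
  have "similar_mat_wit (V * A * W) A V W" "similar_mat_wit (V * B * W) B V W"
    using V W A B VW WV by (auto intro!: similar_mat_witI)
  moreover have "mat_over_prime_field (V * A * W)" "mat_over_prime_field (V * B * W)"
    using frobenius_fixed_conjugate[OF char V W S A VW WV FV FA]
      frobenius_fixed_conjugate[OF char V W S B VW WV FV FB]
    by (simp_all add: mat_over_prime_field_iff_frobenius_fixed[OF char])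
  ultimately show ?thesis
    unfolding realizable_over_prime_field_def A_def B_def by blast
qed

lemma prim_root_of_unity_power_eq_iff:
  fixes \<zeta> :: "'k :: field"
  assumes prim: "prim_root_of_unity p \<zeta>" and p: "p > 0"
  shows "\<zeta> ^ a = \<zeta> ^ b \<longleftrightarrow> [a = b] (mod p)"
proof -
  have unit: "\<zeta> ^ p = 1" and minimal: "\<And>k. 0 < k \<Longrightarrow> k < p \<Longrightarrow> \<zeta> ^ k \<noteq> 1"
    using prim unfolding prim_root_of_unity_def by auto
  have "\<zeta> \<noteq> 0" using unit p by (auto simp: power_0_left)
  have reduce: "\<zeta> ^ x = \<zeta> ^ (x mod p)" for x
  proof -
    have "\<zeta> ^ x = (\<zeta> ^ p) ^ (x div p) * \<zeta> ^ (x mod p)"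
      by (metis mult_div_mod_eq power_add power_mult)
    then show ?thesis using unit by simp
  qed
  have distinct: "\<zeta> ^ x \<noteq> \<zeta> ^ y" if "x < y" "y < p" for x y
  proof
    assume "\<zeta> ^ x = \<zeta> ^ y"
    also have "\<zeta> ^ y = \<zeta> ^ x * \<zeta> ^ (y - x)" using that by (simp flip: power_add)
    finally have "\<zeta> ^ (y - x) = 1" using \<open>\<zeta> \<noteq> 0\<close> by simp
    then show False using minimal[of "y - x"] that by auto
  qed
  have "\<zeta> ^ a = \<zeta> ^ b \<longleftrightarrow> \<zeta> ^ (a mod p) = \<zeta> ^ (b mod p)" by (simp only: reduce[symmetric])
  also have "\<dots> \<longleftrightarrow> a mod p = b mod p"
    using distinct[of "a mod p" "b mod p"] distinct[of "b mod p" "a mod p"] p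
    by (metis linorder_neqE_nat mod_less_divisor)
  finally show ?thesis by (simp add: cong_def)
qed

lemma primroot_even_powers_distinct:
  assumes "prime p" "residue_primroot p g"
    and "i < (p - 1) div 2" "j < (p - 1) div 2" "[g ^ (2 * i) = g ^ (2 * j)] (mod p)"
  shows "i = j"
proof -
  have "ord p g = p - 1" "coprime p g"
    using assms(1,2) by (auto simp: residue_primroot_def totient_prime)
  then have "inj_on (\<lambda>k. g ^ k mod p) {..<p - 1}" using inj_power_mod[of p g] by simp
  moreover have "2 * i \<in> {..<p - 1}" "2 * j \<in> {..<p - 1}" using assms(3,4) by auto
  ultimately have "2 * i = 2 * j" using assms(5) unfolding cong_def by (meson inj_onD)
  then show ?thesis by simp
qed

lemma primroot_even_power_mod:
  assumes "prime p" "odd p" "residue_primroot p g"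
  shows "[g ^ (2 * a) = g ^ (2 * (a mod ((p - 1) div 2)))] (mod p)"
proof -
  let ?n = "(p - 1) div 2"
  have "ord p g = p - 1" using assms(1,3) by (auto simp: residue_primroot_def totient_prime)
  then have "[g ^ (2 * ?n) = 1] (mod p)" using ord_divides[of g "p - 1" p] assms(2) by simp
  then have "[g ^ (2 * (a mod ?n)) * (g ^ (2 * ?n)) ^ (a div ?n)
      = g ^ (2 * (a mod ?n)) * 1 ^ (a div ?n)] (mod p)"
    by (intro cong_mult cong_refl cong_pow)
  moreover have "g ^ (2 * a) = g ^ (2 * (a mod ?n)) * (g ^ (2 * ?n)) ^ (a div ?n)"
  proof -
    have "2 * a = 2 * (a mod ?n) + (2 * ?n) * (a div ?n)"
      by (metis add.commute distrib_left mult.assoc mult_div_mod_eq)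
    then show ?thesis by (metis power_add power_mult)
  qed
  ultimately show ?thesis by simp
qed

lemma QuadRes_iff_even_power:
  assumes p: "prime p" and g: "residue_primroot p g" and s: "\<not> p dvd s"
  shows "QuadRes (int p) (int s) \<longleftrightarrow> (\<exists>k. [s = g ^ (2 * k)] (mod p))"
proof
  assume "QuadRes (int p) (int s)"
  then obtain y where y: "[y ^ 2 = int s] (mod int p)" unfolding QuadRes_def by auto
  define r where "r = nat (y mod int p)"
  have p1: "p > 1" using prime_gt_1_nat[OF p] .
  have "[int r = y] (mod int p)" using p1 by (simp add: r_def cong_def)
  then have "[int (r ^ 2) = int s] (mod int p)" using cong_trans[OF cong_pow y] by simp
  then have r2: "[r ^ 2 = s] (mod p)" using cong_int_iff by blast
  have "\<not> p dvd r"
  proof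
    assume "p dvd r"
    then have "p dvd r ^ 2" by (simp add: power2_eq_square)
    then show False using cong_dvd_iff[OF r2] s by simp
  qed
  have "r < p" using p1 by (simp add: r_def nat_less_iff)
  moreover have "r > 0" using \<open>\<not> p dvd r\<close> by (auto intro: Nat.gr0I)
  moreover have "coprime r p"
    using prime_imp_coprime[OF p \<open>\<not> p dvd r\<close>] by (simp add: coprime_commute)
  ultimately have "r \<in> totatives p" by (simp add: totatives_def)
  moreover have "(\<lambda>i. g ^ i mod p) ` {..<totient p} = totatives p"
    using residue_primroot_is_generator[OF p1 g] by (simp add: bij_betw_def)
  ultimately obtain k where k: "g ^ k mod p = r" by (metis (no_types, lifting) imageE)
  then have "[g ^ k = r] (mod p)" using \<open>r < p\<close> by (simp add: cong_def)
  then have "[g ^ (2 * k) = r ^ 2] (mod p)" using cong_pow[of "g ^ k" r p 2]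
    by (simp add: power_mult mult.commute)
  then show "\<exists>k. [s = g ^ (2 * k)] (mod p)" using r2 by (meson cong_sym cong_trans)
next
  assume "\<exists>k. [s = g ^ (2 * k)] (mod p)"
  then obtain k where "[int s = int (g ^ k) ^ 2] (mod int p)"
    by (metis cong_int_iff of_nat_power power_mult mult.commute)
  then show "QuadRes (int p) (int s)" unfolding QuadRes_def by (metis cong_sym)
qed

(* By Euler's criterion and quadratic reciprocity, (p*/s) = (s/p) with p* = (-1)^((p-1)/2) p. *)
lemma Legendre_pstar:
  assumes "prime p" "prime s" "odd p" "odd s" "p \<noteq> s"
  shows "Legendre ((-1) ^ ((p - 1) div 2) * int p) (int s) = Legendre (int s) (int p)"
proof -
  let ?n = "(p - 1) div 2" and ?m = "(s - 1) div 2"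
  let ?Ls = "Legendre ((-1) ^ ?n * int p) (int s)"
  let ?L1 = "Legendre (int p) (int s)" and ?L2 = "Legendre (int s) (int p)"
  have "p \<ge> 2" "s \<ge> 2" "p \<noteq> 2" "s \<noteq> 2" using assms prime_ge_2_nat by auto
  then have p2: "2 < p" and s2: "2 < s" by auto
  have euler_s: "[?Ls = ((-1) ^ ?n * int p) ^ ?m] (mod int s)"
    using euler_criterion[OF assms(2) s2] by simp
  have euler_p: "[?L1 = int p ^ ?m] (mod int s)"
    using euler_criterion[OF assms(2) s2] by simp
  have QR: "?L1 * ?L2 = (-1) ^ (?n * ?m)"
    using Quadratic_Reciprocity[OF assms(1) p2 assms(2) s2 assms(5)] by simp
  have "\<not> [int p = 0] (mod int s)"
  proof
    assume "[int p = 0] (mod int s)"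
    then have "s dvd p" by (metis cong_0_iff int_dvd_int_iff)
    then show False
      using assms by (metis prime_nat_iff prime_gt_1_nat less_numeral_extra(4) primes_dvd_imp_eq)
  qed
  then have L1: "?L1 \<in> {-1, 1}" by (auto simp: Legendre_def)
  have "((-1) ^ ?n * int p) ^ ?m = (-1) ^ (?n * ?m) * int p ^ ?m"
    by (simp add: power_mult_distrib power_mult)
  then have "[?Ls = (-1) ^ (?n * ?m) * int p ^ ?m] (mod int s)" using euler_s by simp
  also have "[(-1) ^ (?n * ?m) * int p ^ ?m = (-1) ^ (?n * ?m) * ?L1] (mod int s)"
    by (intro cong_mult cong_refl cong_sym[OF euler_p])
  also have "(-1) ^ (?n * ?m) * ?L1 = ?L2"
    using L1 QR[symmetric] by auto
  finally have "int s dvd ?Ls - ?L2" by (simp add: cong_iff_dvd_diff)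
  show ?thesis
  proof (rule ccontr)
    assume "?Ls \<noteq> ?L2"
    then have "\<bar>int s\<bar> \<le> \<bar>?Ls - ?L2\<bar>"
      using \<open>int s dvd ?Ls - ?L2\<close> by (intro dvd_imp_le_int) auto
    moreover have "\<bar>?Ls - ?L2\<bar> \<le> 2" by (auto simp: Legendre_def)
    ultimately show False using s2 by simp
  qed
qed

lemma even_power_roots_inj:
  fixes \<zeta> :: "'k :: field"
  assumes p: "prime p" and g: "residue_primroot p g" and \<zeta>: "prim_root_of_unity p \<zeta>"
  shows "inj_on (\<lambda>j. \<zeta> ^ (g ^ (2 * j))) {..<(p - 1) div 2}"
  using primroot_even_powers_distinct[OF p g]
    prim_root_of_unity_power_eq_iff[OF \<zeta> prime_gt_0_nat[OF p]]
  by (auto intro!: inj_onI)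

lemma even_power_roots_frobenius_shift:
  fixes \<zeta> :: "'k :: field"
  assumes p: "prime p" "odd p" and g: "residue_primroot p g" and \<zeta>: "prim_root_of_unity p \<zeta>"
    and s: "[s = g ^ (2 * k)] (mod p)"
  shows "(\<zeta> ^ (g ^ (2 * j))) ^ s = \<zeta> ^ (g ^ (2 * ((j + k) mod ((p - 1) div 2))))"
proof -
  have "[g ^ (2 * j) * s = g ^ (2 * j) * g ^ (2 * k)] (mod p)" by (intro cong_mult cong_refl s)
  also have "g ^ (2 * j) * g ^ (2 * k) = g ^ (2 * (j + k))" by (simp add: power_add distrib_left)
  also have "[\<dots> = g ^ (2 * ((j + k) mod ((p - 1) div 2)))] (mod p)"
    by (rule primroot_even_power_mod[OF p g])
  finally show ?thesis
    unfolding power_mult[symmetric] prim_root_of_unity_power_eq_iff[OF \<zeta> prime_gt_0_nat[OF p(1)]] .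
qed

lemma even_power_roots_frobenius_preimage:
  fixes \<zeta> :: "'k :: field"
  assumes p: "prime p" "odd p" and g: "residue_primroot p g" and \<zeta>: "prim_root_of_unity p \<zeta>"
    and i: "i < (p - 1) div 2" and fix0: "(\<zeta> ^ (g ^ (2 * i))) ^ s = \<zeta>"
  shows "\<exists>k. [s = g ^ (2 * k)] (mod p)"
proof -
  let ?n = "(p - 1) div 2"
  have "\<zeta> ^ (g ^ (2 * i) * s) = \<zeta> ^ 1" using fix0 by (simp only: power_mult power_one_right)
  then have "[g ^ (2 * i) * s = 1] (mod p)"
    unfolding prim_root_of_unity_power_eq_iff[OF \<zeta> prime_gt_0_nat[OF p(1)]] .
  have "[g ^ (2 * ?n) = 1] (mod p)"
    using primroot_even_power_mod[OF p g, of ?n] by simp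
  have "[s = g ^ (2 * ?n) * s] (mod p)"
    using cong_mult[OF cong_sym[OF \<open>[g ^ (2 * ?n) = 1] (mod p)\<close>] cong_refl[of s]] by simp
  also have "g ^ (2 * ?n) * s = g ^ (2 * (?n - i)) * (g ^ (2 * i) * s)"
    using i by (simp flip: power_add mult.assoc add: distrib_left[symmetric])
  also have "[\<dots> = g ^ (2 * (?n - i)) * 1] (mod p)"
    by (intro cong_mult cong_refl \<open>[g ^ (2 * i) * s = 1] (mod p)\<close>)
  finally show ?thesis by auto
qed

theorem theorem3p3:
  fixes p s g :: nat and \<zeta> :: "'k :: alg_closed_field"
  assumes "prime p" and "prime s" and "odd p" and "odd s" and "p \<noteq> s"
    and "residue_primroot p g"
    and "is_alg_closure_of_Fp TYPE('k) s"
    and "prim_root_of_unity p \<zeta>"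
  shows "realizable_over_prime_field (ind_rep_a p g \<zeta>) (ind_rep_b p :: 'k mat)
     \<longleftrightarrow> Legendre ((-1) ^ ((p - 1) div 2) * int p) (int s) = 1"
proof -
  define n where "n = (p - 1) div 2"
  define z where "z = (\<lambda>j. \<zeta> ^ (g ^ (2 * j)))"
  have char: "CHAR('k) = s" "prime CHAR('k)" using assms(2,7) by (auto simp: is_alg_closure_of_Fp_def)
  have "n > 0" using assms(1,3) prime_ge_2_nat[OF assms(1)] by (auto simp: n_def elim: oddE)
  have A: "ind_rep_a p g \<zeta> = mat_diag n z"
    by (auto simp: ind_rep_a_def mat_diag_def n_def z_def intro!: eq_matI)
  have B: "ind_rep_b p = (cyclic_shift_mat n 1 :: 'k mat)"
    by (simp add: ind_rep_b_def cyclic_shift_mat_def n_def)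
  have "\<not> p dvd s" using assms(1,2,5) primes_dvd_imp_eq by blast
  then have L: "Legendre ((-1) ^ ((p - 1) div 2) * int p) (int s) = 1
      \<longleftrightarrow> (\<exists>k. [s = g ^ (2 * k)] (mod p))"
    using Legendre_pstar[OF assms(1-5)] QuadRes_iff_even_power[OF assms(1,6)]
    by (auto simp: Legendre_def cong_0_iff)
  show ?thesis unfolding A B L
  proof
    assume "realizable_over_prime_field (mat_diag n z) (cyclic_shift_mat n 1)"
    then obtain i where "i < n" "z i ^ s = z 0"
      using frobenius_permutes_diagonal[OF char(2) _ _ \<open>n > 0\<close>] char(1)
      unfolding realizable_over_prime_field_def by blast
    then show "\<exists>k. [s = g ^ (2 * k)] (mod p)"
      using even_power_roots_frobenius_preimage[OF assms(1,3,6,8)] by (simp add: z_def n_def)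
  next
    assume "\<exists>k. [s = g ^ (2 * k)] (mod p)"
    then obtain k where k: "[s = g ^ (2 * k)] (mod p)" ..
    show "realizable_over_prime_field (mat_diag n z) (cyclic_shift_mat n 1)"
    proof (rule realizable_diagonal_cyclic_shift[OF char(2)])
      show "inj_on z {..<n}"
        using even_power_roots_inj[OF assms(1,6,8)] by (simp add: z_def n_def)
      show "z j ^ CHAR('k) = z ((j + k) mod n)" for j
        using even_power_roots_frobenius_shift[OF assms(1,3,6,8) k] char(1) by (simp add: z_def n_def)
    qed
  qed
qed

end
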